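(* Let $\mathcal{C}$ be a finite set of classes with $|\mathcal{C}| = C$, let $\mathcal{X}$ be a domain of datapoints, and let $(X, Y, \tilde{Y})$ be random variables with $(X,Y)$ distributed according to a prior $Q_{X,Y}$ on $\mathcal{X}\times\mathcal{C}$ and $\tilde{Y}$ taking values in $\mathcal{C}$. Assume: (i) (independent noise) $X$ is independent of $\tilde{Y}$ conditioning on $Y$; (ii) (informative noisy label) the $C\times C$ noise transition matrix $\mathbf{T}_{Y\rightarrow\tilde{Y}}$, with entries $\mathbf{T}_{Y\rightarrow\tilde{Y}}(y,\tilde{y}) = \Pr[\tilde{Y}=\tilde{y}\mid Y=y]$, is invertible. For a (randomized) classifier $h$ and a $\mathcal{C}$-valued random variable $Z\in\{Y,\tilde Y\}$, define $$\mathcal{L}_{\mathrm{DMI}}(Q_{h(X),Z}) := -\log\bigl(|\det(\mathbf{Q}_{h(X),Z})|\bigr),$$ where $\mathbf{Q}_{h(X),Z}$ is the $C\times C$ matrix with entries $\mathbf{Q}_{h(X),Z}(c,z) = \Pr[h(X)=c, Z=z]$. Then: 1. (legal) If there exists a ground truth classifier $h^*$ with $h^*(X)=Y$, then for every classifier $h$, $\mathcal{L}_{\mathrm{DMI}}(Q_{h^*(X),\tilde{Y}})\le \mathcal{L}_{\mathrm{DMI}}(Q_{h(X),\tilde{Y}})$, and the inequality is strict when $h(X)$ is not a permutation of $h^*(X)$, i.e. when there is no permutation $\pi:\mathcal{C}\to\mathcal{C}$ with $h(x)=\pi(h^*(x))$ for all $x\in\mathcal{X}$. 2. (noise-robust)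 For the set $\mathcal{H}$ of all possible classifiers, $$\arg\min_{h\in\mathcal{H}}\mathcal{L}_{\mathrm{DMI}}(Q_{h(X),\tilde{Y}}) = \arg\min_{h\in\mathcal{H}}\mathcal{L}_{\mathrm{DMI}}(Q_{h(X),Y}),$$ and in fact there is a constant $\alpha$ (not depending on $h$) such that for every classifier $h$, $\mathcal{L}_{\mathrm{DMI}}(Q_{h(X),\tilde{Y}}) = \mathcal{L}_{\mathrm{DMI}}(Q_{h(X),Y}) + \alpha$. 3. (information-monotone) For every two classifiers $h,h'$, if $h'(X)$ is independent of $Y$ conditioning on $h(X)$, then $\mathcal{L}_{\mathrm{DMI}}(Q_{h(X),\tilde{Y}})\le\mathcal{L}_{\mathrm{DMI}}(Q_{h'(X),\tilde{Y}})$.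
   Context: A (randomized) classifier is a map $h:\mathcal{X}\to\Delta_{\mathcal{C}}$, where $\Delta_{\mathcal{C}}$ is the set of probability distributions over $\mathcal{C}$; given $x$, $h(x)_c$ is the probability that $h$ maps $x$ to class $c$. The random variable $h(X)$ takes value $c$ with probability $h(X)_c$ given $X$, and, fixing the input $x$, the randomness of the classifier is independent of everything else (in particular of $Y$ and $\tilde{Y}$). The convention $-\log 0 = +\infty$ is used when the determinant vanishes. *)

theory Defs
  imports "HOL-Probability.Probability"
begin

text \<open>A randomized classifier on the measurable space SX of datapoints:
  h x c is the probability that h maps x to class c.\<close>
definition is_classifier :: "'x measure \<Rightarrow> ('x \<Rightarrow> 'c::finite \<Rightarrow> real) \<Rightarrow> bool" where
  "is_classifier SX h \<longleftrightarrow>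
     (\<forall>x c. 0 \<le> h x c) \<and> (\<forall>x. (\<Sum>c\<in>UNIV. h x c) = 1) \<and>
     (\<forall>c. (\<lambda>x. h x c) \<in> borel_measurable SX)"

definition det_clf :: "('x \<Rightarrow> 'c) \<Rightarrow> 'x \<Rightarrow> 'c \<Rightarrow> real" where
  "det_clf f x c = (if c = f x then 1 else 0)"

text \<open>Joint distribution matrix Q_{h(X),Z}(c,z) = Pr[h(X)=c, Z=z]; the randomness of h
  is independent of everything else given X.\<close>
definition Qmat :: "'w measure \<Rightarrow> ('w \<Rightarrow> 'x) \<Rightarrow> ('x \<Rightarrow> 'c::finite \<Rightarrow> real) \<Rightarrow> ('w \<Rightarrow> 'c)
    \<Rightarrow> real^'c^'c" where
  "Qmat M X h Z = (\<chi> c z. \<integral>w. h (X w) c * (if Z w = z then 1 else 0) \<partial>M)"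

definition L_DMI :: "real^'c^'c \<Rightarrow> ereal" where
  "L_DMI Q = (if det Q = 0 then \<infinity> else ereal (- ln \<bar>det Q\<bar>))"

definition Tmat :: "'w measure \<Rightarrow> ('w \<Rightarrow> 'c::finite) \<Rightarrow> ('w \<Rightarrow> 'c) \<Rightarrow> real^'c^'c" where
  "Tmat M Y Yt = (\<chi> y y'. measure M {w \<in> space M. Y w = y \<and> Yt w = y'}
                         / measure M {w \<in> space M. Y w = y})"

definition cond_indep_XYt :: "'w measure \<Rightarrow> 'x measure \<Rightarrow> ('w \<Rightarrow> 'x) \<Rightarrow> ('w \<Rightarrow> 'c) \<Rightarrow> ('w \<Rightarrow> 'c) \<Rightarrow> bool" where
  "cond_indep_XYt M SX X Y Yt \<longleftrightarrow>
    (\<forall>A\<in>sets SX. \<forall>y y'.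
       measure M {w \<in> space M. X w \<in> A \<and> Yt w = y' \<and> Y w = y} * measure M {w \<in> space M. Y w = y}
     = measure M {w \<in> space M. X w \<in> A \<and> Y w = y} * measure M {w \<in> space M. Yt w = y' \<and> Y w = y})"

text \<open>Joint probabilities involving the classifier outputs h(X), h'(X) (whose internal
  randomness is independent given X) and Y.\<close>
definition P_hh'Y :: "'w measure \<Rightarrow> ('w \<Rightarrow> 'x) \<Rightarrow> ('x \<Rightarrow> 'c \<Rightarrow> real) \<Rightarrow> ('x \<Rightarrow> 'c \<Rightarrow> real)
    \<Rightarrow> ('w \<Rightarrow> 'c) \<Rightarrow> 'c \<Rightarrow> 'c \<Rightarrow> 'c \<Rightarrow> real" where
  "P_hh'Y M X h h' Y c c' y = (\<integral>w. h (X w) c * h' (X w) c' * (if Y w = y then 1 else 0) \<partial>M)"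

definition P_hh' :: "'w measure \<Rightarrow> ('w \<Rightarrow> 'x) \<Rightarrow> ('x \<Rightarrow> 'c \<Rightarrow> real) \<Rightarrow> ('x \<Rightarrow> 'c \<Rightarrow> real)
    \<Rightarrow> 'c \<Rightarrow> 'c \<Rightarrow> real" where
  "P_hh' M X h h' c c' = (\<integral>w. h (X w) c * h' (X w) c' \<partial>M)"

definition P_hY :: "'w measure \<Rightarrow> ('w \<Rightarrow> 'x) \<Rightarrow> ('x \<Rightarrow> 'c \<Rightarrow> real) \<Rightarrow> ('w \<Rightarrow> 'c) \<Rightarrow> 'c \<Rightarrow> 'c \<Rightarrow> real" where
  "P_hY M X h Y c y = (\<integral>w. h (X w) c * (if Y w = y then 1 else 0) \<partial>M)"

definition P_h :: "'w measure \<Rightarrow> ('w \<Rightarrow> 'x) \<Rightarrow> ('x \<Rightarrow> 'c \<Rightarrow> real) \<Rightarrow> 'c \<Rightarrow> real" where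
  "P_h M X h c = (\<integral>w. h (X w) c \<partial>M)"

definition cond_indep_clf :: "'w measure \<Rightarrow> ('w \<Rightarrow> 'x) \<Rightarrow> ('x \<Rightarrow> 'c \<Rightarrow> real) \<Rightarrow> ('x \<Rightarrow> 'c \<Rightarrow> real)
    \<Rightarrow> ('w \<Rightarrow> 'c) \<Rightarrow> bool" where
  "cond_indep_clf M X h h' Y \<longleftrightarrow>
    (\<forall>c c' y. P_hh'Y M X h h' Y c c' y * P_h M X h c = P_hY M X h Y c y * P_hh' M X h h' c c')"

end

theory Submission
  imports Defs
begin

text \<open>If X and the noisy label are independent given Y, then Q_{h(X),Yt} = Q_{h(X),Y} T, so
  L_DMI under noisy labels is L_DMI under clean labels shifted by the constant - ln |det T|,
  and all claims reduce to clean labels. For a nonnegative matrix, |det| is at most the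
  product of the row sums, because the permutation terms of the determinant are among the
  terms of the expanded product. The columns of Q_{h(X),Y} sum to Pr[Y = y], and the ground
  truth classifier has the diagonal matrix attaining this bound; equality forces every
  non-injective term to vanish, which confines the support of Q_{h(X),Y} to the graph of a
  permutation. If h'(X) is independent of Y given h(X), then Q_{h'(X),Y} = W Q_{h(X),Y} for
  the channel W from h(X) to h'(X), whose columns sum to at most 1, so |det W| \<le> 1.\<close>

lemma transpose_nth [simp]: "transpose A $ i $ j = A $ j $ i"
  by (simp add: transpose_def)

lemma prod_row_sums_eq_sum_funs:
  fixes A :: "'a::comm_semiring_1^'n^'n"
  shows "(\<Prod>i\<in>UNIV. \<Sum>j\<in>UNIV. A$i$j) = (\<Sum>g\<in>UNIV. \<Prod>i\<in>UNIV. A$i$g i)"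
proof -
  have "(\<Prod>i\<in>UNIV. \<Sum>j\<in>UNIV. A$i$j) = (\<Sum>g\<in>PiE UNIV (\<lambda>_. UNIV). \<Prod>i\<in>UNIV. A$i$g i)"
    by (rule prod_sum_PiE) auto
  also have "PiE (UNIV::'n set) (\<lambda>_. UNIV::'n set) = UNIV"
    by auto
  finally show ?thesis .
qed

lemma abs_det_add_nonperm_terms_le_prod_row_sums:
  fixes A :: "real^'n^'n"
  assumes nonneg: "\<And>i j. 0 \<le> A$i$j"
  shows "\<bar>det A\<bar> + (\<Sum>g\<in>-{p. p permutes UNIV}. \<Prod>i\<in>UNIV. A$i$g i)
           \<le> (\<Prod>i\<in>UNIV. \<Sum>j\<in>UNIV. A$i$j)"
proof -
  let ?P = "{p. p permutes (UNIV::'n set)}"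
  have "\<bar>det A\<bar> \<le> (\<Sum>p\<in>?P. \<bar>of_int (sign p) * (\<Prod>i\<in>UNIV. A$i$p i)\<bar>)"
    unfolding det_def by (rule sum_abs)
  also have "\<dots> = (\<Sum>p\<in>?P. \<Prod>i\<in>UNIV. A$i$p i)"
    by (rule sum.cong) (auto simp: abs_mult sign_def nonneg prod_nonneg)
  finally have "\<bar>det A\<bar> \<le> (\<Sum>p\<in>?P. \<Prod>i\<in>UNIV. A$i$p i)" .
  moreover have "(\<Sum>g\<in>UNIV. \<Prod>i\<in>UNIV. A$i$g i)
      = (\<Sum>g\<in>-?P. \<Prod>i\<in>UNIV. A$i$g i) + (\<Sum>p\<in>?P. \<Prod>i\<in>UNIV. A$i$p i)"
    by (simp add: sum.subset_diff[of ?P UNIV] Compl_eq_Diff_UNIV)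
  ultimately show ?thesis
    unfolding prod_row_sums_eq_sum_funs by linarith
qed

corollary abs_det_le_prod_row_sums:
  fixes A :: "real^'n^'n"
  assumes "\<And>i j. 0 \<le> A$i$j"
  shows "\<bar>det A\<bar> \<le> (\<Prod>i\<in>UNIV. \<Sum>j\<in>UNIV. A$i$j)"
proof -
  have "0 \<le> (\<Sum>g\<in>-{p. p permutes UNIV}. \<Prod>i\<in>UNIV. A$i$g i)"
    by (intro sum_nonneg prod_nonneg assms)
  then show ?thesis
    using abs_det_add_nonperm_terms_le_prod_row_sums[OF assms] by linarith
qed

corollary abs_det_le_one_if_row_sums_le_one:
  fixes A :: "real^'n^'n"
  assumes "\<And>i j. 0 \<le> A$i$j" and "\<And>i. (\<Sum>j\<in>UNIV. A$i$j) \<le> 1"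
  shows "\<bar>det A\<bar> \<le> 1"
  using abs_det_le_prod_row_sums[OF assms(1)] prod_le_1[of UNIV "\<lambda>i. \<Sum>j\<in>UNIV. A$i$j"] assms
  by (meson order_trans sum_nonneg)

lemma perm_support_if_noninj_terms_vanish:
  fixes A :: "real^'n^'n"
  assumes nonneg: "\<And>i j. 0 \<le> A$i$j" and row_pos: "\<And>i. \<exists>j. 0 < A$i$j"
    and noninj: "\<And>g. \<not> inj g \<Longrightarrow> (\<Prod>i\<in>UNIV. A$i$g i) = 0"
  shows "\<exists>\<pi>. bij \<pi> \<and> (\<forall>i j. j \<noteq> \<pi> i \<longrightarrow> A$i$j = 0)"
proof -
  define \<pi> where "\<pi> i = (SOME j. 0 < A$i$j)" for i
  have \<pi>_pos: "0 < A$i$\<pi> i" for i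
    unfolding \<pi>_def by (rule someI_ex[OF row_pos])
  have column_unique: "i = i'" if "0 < A$i$j" "0 < A$i'$j" for i i' j
  proof (rule ccontr)
    assume "i \<noteq> i'"
    define g where "g k = (if k = i \<or> k = i' then j else \<pi> k)" for k
    have "\<not> inj g"
      using \<open>i \<noteq> i'\<close> by (auto simp: inj_def g_def)
    moreover have "0 < (\<Prod>k\<in>UNIV. A$k$g k)"
      by (rule prod_pos) (use that \<pi>_pos in \<open>auto simp: g_def\<close>)
    ultimately show False
      using noninj by simp
  qed
  have "inj \<pi>"
    by (rule injI) (metis \<pi>_pos column_unique)
  then have "bij \<pi>"
    by (simp add: bij_def finite_UNIV_inj_surj)
  moreover have "A$i$j = 0" if "j \<noteq> \<pi> i" for i j
  proof (rule ccontr)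
    assume "A$i$j \<noteq> 0"
    with nonneg have "0 < A$i$j"
      by (simp add: order_less_le)
    moreover obtain i' where "j = \<pi> i'"
      using \<open>bij \<pi>\<close> by (metis bij_pointE)
    ultimately show False
      using column_unique \<pi>_pos that by metis
  qed
  ultimately show ?thesis
    by blast
qed

lemma abs_det_eq_prod_row_sums_imp_perm_support:
  fixes A :: "real^'n^'n"
  assumes nonneg: "\<And>i j. 0 \<le> A$i$j" and row_pos: "\<And>i. 0 < (\<Sum>j\<in>UNIV. A$i$j)"
    and eq: "\<bar>det A\<bar> = (\<Prod>i\<in>UNIV. \<Sum>j\<in>UNIV. A$i$j)"
  shows "\<exists>\<pi>. bij \<pi> \<and> (\<forall>i j. j \<noteq> \<pi> i \<longrightarrow> A$i$j = 0)"
proof (rule perm_support_if_noninj_terms_vanish[OF nonneg])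
  show "\<exists>j. 0 < A$i$j" for i
    using row_pos[of i] by (metis not_le sum_nonpos)
  have terms_nonneg: "0 \<le> (\<Prod>i\<in>UNIV. A$i$g i)" for g
    by (intro prod_nonneg) (simp add: nonneg)
  then have "0 \<le> (\<Sum>g\<in>-{p. p permutes UNIV}. \<Prod>i\<in>UNIV. A$i$g i)"
    by (rule sum_nonneg)
  then have "(\<Sum>g\<in>-{p. p permutes UNIV}. \<Prod>i\<in>UNIV. A$i$g i) = 0"
    using abs_det_add_nonperm_terms_le_prod_row_sums[OF nonneg] eq by linarith
  then have "\<forall>g\<in>-{p. p permutes UNIV}. (\<Prod>i\<in>UNIV. A$i$g i) = 0"
    using sum_nonneg_eq_0_iff[of "-{p. p permutes UNIV}" "\<lambda>g. \<Prod>i\<in>UNIV. A$i$g i"] terms_nonneg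
    by (simp del: prod_zero_iff)
  then show "(\<Prod>i\<in>UNIV. A$i$g i) = 0" if "\<not> inj g" for g
    using that permutes_inj by blast
qed

lemma L_DMI_le_iff: "L_DMI Q \<le> L_DMI Q' \<longleftrightarrow> \<bar>det Q'\<bar> \<le> \<bar>det Q\<bar>"
  unfolding L_DMI_def by auto

lemma L_DMI_less_iff: "L_DMI Q < L_DMI Q' \<longleftrightarrow> \<bar>det Q'\<bar> < \<bar>det Q\<bar>"
  unfolding L_DMI_def by auto

lemma L_DMI_mult: "det T \<noteq> 0 \<Longrightarrow> L_DMI (Q ** T) = L_DMI Q + ereal (- ln \<bar>det T\<bar>)"
  unfolding L_DMI_def by (simp add: det_mul abs_mult ln_mult)

lemma is_classifier_nonneg: "is_classifier SX h \<Longrightarrow> 0 \<le> h x c"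
  by (simp add: is_classifier_def)

lemma is_classifier_sum: "is_classifier SX h \<Longrightarrow> (\<Sum>c\<in>UNIV. h x c) = 1"
  by (simp add: is_classifier_def)

lemma is_classifier_measurable: "is_classifier SX h \<Longrightarrow> (\<lambda>x. h x c) \<in> borel_measurable SX"
  by (simp add: is_classifier_def)

lemma is_classifier_le_one:
  assumes "is_classifier SX h"
  shows "h x c \<le> 1"
proof -
  have "h x c \<le> (\<Sum>c\<in>UNIV. h x c)"
    by (rule member_le_sum) (simp_all add: is_classifier_nonneg[OF assms])
  then show ?thesis
    by (simp add: is_classifier_sum[OF assms])
qed

lemma is_classifier_point_mass:
  assumes "is_classifier SX h" and "\<And>c. c \<noteq> c0 \<Longrightarrow> h x c = 0"
  shows "h x c = (if c = c0 then 1 else 0)"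
proof -
  have "(\<Sum>c\<in>UNIV. h x c) = (\<Sum>c\<in>UNIV. if c = c0 then h x c0 else 0)"
    by (rule sum.cong) (simp_all add: assms(2))
  then have "h x c0 = 1"
    by (simp add: is_classifier_sum[OF assms(1)])
  then show ?thesis
    by (simp add: assms(2))
qed

lemma is_classifier_det_clf:
  assumes [measurable]: "f \<in> measurable SX (count_space UNIV)"
  shows "is_classifier SX (det_clf f)"
  unfolding is_classifier_def det_clf_def by simp

lemma label_prob_pos_if_invertible_Tmat:
  assumes "invertible (Tmat M Y Yt)"
  shows "0 < \<P>(w in M. Y w = y)"
proof (rule ccontr)
  assume "\<not> ?thesis"
  then have "\<P>(w in M. Y w = y) = 0"
    using measure_nonneg[of M] by (meson antisym not_less)
  then have "row y (Tmat M Y Yt) = 0"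
    by (simp add: Tmat_def row_def vec_eq_iff)
  then have "det (Tmat M Y Yt) = 0"
    by (rule det_zero_row)
  with assms show False
    by (simp add: invertible_det_nz)
qed

lemma integral_comp_indicator_scaled_eq:
  fixes g :: "'x \<Rightarrow> real"
  assumes "finite_measure M"
    and [measurable]: "X \<in> measurable M SX" "g \<in> borel_measurable SX" "B \<in> sets M" "B' \<in> sets M"
    and "0 \<le> a" "0 \<le> b"
    and scaled: "\<And>A. A \<in> sets SX \<Longrightarrow>
      a * measure M (B \<inter> (X -` A \<inter> space M)) = b * measure M (B' \<inter> (X -` A \<inter> space M))"
  shows "a * (\<integral>w. indicator B w * g (X w) \<partial>M) = b * (\<integral>w. indicator B' w * g (X w) \<partial>M)"
proof -
  interpret finite_measure M by fact
  define N where "N B a = density (distr (density M (indicator B)) SX X) (\<lambda>_. ennreal a)" for B a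
  have sets_N: "sets (N B a) = sets SX" for B a
    by (simp add: N_def)
  have emeasure_N: "emeasure (N B a) A = ennreal (a * measure M (B \<inter> (X -` A \<inter> space M)))"
    if "B \<in> sets M" "0 \<le> a" "A \<in> sets SX" for B a A
    using that by (simp add: N_def emeasure_density_const emeasure_distr emeasure_restricted
        emeasure_eq_measure ennreal_mult)
  have integral_N: "integral\<^sup>L (N B a) g = a * (\<integral>w. indicator B w * g (X w) \<partial>M)"
    if [measurable]: "B \<in> sets M" and "0 \<le> a" for B a
  proof -
    have "integral\<^sup>L (N B a) g = (\<integral>x. a * g x \<partial>distr (density M (indicator B)) SX X)"
      unfolding N_def using \<open>0 \<le> a\<close> by (subst integral_density) auto
    also have "\<dots> = (\<integral>w. a * g (X w) \<partial>density M (\<lambda>w. ennreal (indicator B w :: real)))"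
      unfolding ennreal_indicator by (rule integral_distr) auto
    also have "\<dots> = (\<integral>w. indicator B w * (a * g (X w)) \<partial>M)"
      by (subst integral_density) auto
    finally show ?thesis
      by (simp add: ac_simps)
  qed
  have "N B a = N B' b"
    by (rule measure_eqI) (simp_all add: sets_N emeasure_N scaled assms(4-7))
  then show ?thesis
    using integral_N \<open>0 \<le> a\<close> \<open>0 \<le> b\<close> by (metis assms(4,5))
qed

locale random_datapoint = prob_space M for M :: "'w measure" +
  fixes SX :: "'x measure" and X :: "'w \<Rightarrow> 'x"
  assumes X_measurable[measurable]: "X \<in> measurable M SX"
begin

lemma integrable_classifier_mult:
  assumes h: "is_classifier SX h" and [measurable]: "g \<in> borel_measurable M"
    and bounded: "\<And>w. \<bar>g w\<bar> \<le> 1"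
  shows "integrable M (\<lambda>w. h (X w) c * g w)"
proof (rule integrable_const_bound[where B=1])
  have [measurable]: "(\<lambda>x. h x c) \<in> borel_measurable SX"
    by (rule is_classifier_measurable[OF h])
  show "(\<lambda>w. h (X w) c * g w) \<in> borel_measurable M"
    by measurable
  show "AE w in M. norm (h (X w) c * g w) \<le> 1"
    using bounded by (simp add: abs_mult is_classifier_nonneg[OF h] is_classifier_le_one[OF h] mult_le_one)
qed

lemma integrable_classifier_product:
  assumes h: "is_classifier SX h" and h': "is_classifier SX h'"
    and [measurable]: "g \<in> borel_measurable M" and "\<And>w. \<bar>g w\<bar> \<le> 1"
  shows "integrable M (\<lambda>w. h (X w) c * h' (X w) c' * g w)"
proof -
  have [measurable]: "(\<lambda>x. h' x c') \<in> borel_measurable SX"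
    by (rule is_classifier_measurable[OF h'])
  have "integrable M (\<lambda>w. h (X w) c * (h' (X w) c' * g w))"
    by (rule integrable_classifier_mult[OF h])
      (simp_all add: abs_mult is_classifier_nonneg[OF h'] is_classifier_le_one[OF h'] assms(4) mult_le_one)
  then show ?thesis
    by (simp add: mult.assoc)
qed

lemma integral_label_indicator:
  assumes [measurable]: "Z \<in> measurable M (count_space UNIV)"
  shows "(\<integral>w. (if Z w = z then 1 else 0) \<partial>M) = \<P>(w in M. Z w = z)"
proof -
  have "(\<integral>w. (if Z w = z then 1 else 0) \<partial>M) = (\<integral>w. indicator {w\<in>space M. Z w = z} w \<partial>M)"
    by (rule Bochner_Integration.integral_cong) (auto simp: indicator_def)
  also have "\<dots> = \<P>(w in M. Z w = z)"
    by (simp add: Int_absorb2)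
  finally show ?thesis .
qed

lemma Qmat_nonneg: "is_classifier SX h \<Longrightarrow> 0 \<le> Qmat M X h Z $ c $ z"
  unfolding Qmat_def by (simp add: integral_nonneg is_classifier_nonneg)

lemma Qmat_column_sum:
  assumes h: "is_classifier SX h" and [measurable]: "Z \<in> measurable M (count_space UNIV)"
  shows "(\<Sum>c\<in>UNIV. Qmat M X h Z $ c $ z) = \<P>(w in M. Z w = z)"
proof -
  have "(\<Sum>c\<in>UNIV. Qmat M X h Z $ c $ z)
      = (\<integral>w. (\<Sum>c\<in>UNIV. h (X w) c) * (if Z w = z then 1 else 0) \<partial>M)"
    unfolding Qmat_def sum_distrib_right
    by (simp add: integrable_classifier_mult[OF h])
  also have "\<dots> = \<P>(w in M. Z w = z)"
    by (simp add: is_classifier_sum[OF h] integral_label_indicator)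
  finally show ?thesis .
qed

lemma Qmat_det_clf:
  assumes [measurable]: "f \<in> measurable SX (count_space UNIV)" "Z \<in> measurable M (count_space UNIV)"
    and truth: "AE w in M. Z w = f (X w)"
  shows "Qmat M X (det_clf f) Z = (\<chi> c z. if c = z then \<P>(w in M. Z w = z) else 0)"
proof -
  have "(\<integral>w. det_clf f (X w) c * (if Z w = z then 1 else 0) \<partial>M)
      = (\<integral>w. (if c = z then 1 else 0) * (if Z w = z then 1 else 0) \<partial>M)" for c z
    by (rule integral_cong_AE) (use truth in \<open>auto simp: det_clf_def\<close>)
  then show ?thesis
    by (simp add: Qmat_def vec_eq_iff integral_label_indicator)
qed

lemma det_Qmat_det_clf:
  assumes "f \<in> measurable SX (count_space UNIV)" "Z \<in> measurable M (count_space UNIV)"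
    and "AE w in M. Z w = f (X w)"
  shows "det (Qmat M X (det_clf f) Z) = (\<Prod>z\<in>UNIV. \<P>(w in M. Z w = z))"
  by (subst det_diagonal) (simp_all add: Qmat_det_clf[OF assms])

lemma abs_det_Qmat_le:
  assumes "is_classifier SX h" "Z \<in> measurable M (count_space UNIV)"
  shows "\<bar>det (Qmat M X h Z)\<bar> \<le> (\<Prod>z\<in>UNIV. \<P>(w in M. Z w = z))"
  using abs_det_le_prod_row_sums[of "transpose (Qmat M X h Z)"]
  by (simp add: det_transpose Qmat_nonneg Qmat_column_sum assms)

lemma AE_classifier_zero_if_Qmat_zero:
  assumes h: "is_classifier SX h" and [measurable]: "Z \<in> measurable M (count_space UNIV)"
    and "Qmat M X h Z $ c $ z = 0"
  shows "AE w in M. Z w = z \<longrightarrow> h (X w) c = 0"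
proof -
  have "integrable M (\<lambda>w. h (X w) c * (if Z w = z then 1 else 0))"
    by (rule integrable_classifier_mult[OF h]) simp_all
  then have "AE w in M. h (X w) c * (if Z w = z then 1 else 0) = 0"
    using assms(3) by (simp add: Qmat_def integral_nonneg_eq_0_iff_AE is_classifier_nonneg[OF h])
  then show ?thesis
    by (rule eventually_mono) auto
qed

lemma abs_det_Qmat_eq_imp_perm:
  assumes h: "is_classifier SX h" and f: "f \<in> measurable SX (count_space UNIV)"
    and Z: "Z \<in> measurable M (count_space UNIV)" and truth: "AE w in M. Z w = f (X w)"
    and pos: "\<And>z. 0 < \<P>(w in M. Z w = z)"
    and eq: "\<bar>det (Qmat M X h Z)\<bar> = (\<Prod>z\<in>UNIV. \<P>(w in M. Z w = z))"
  shows "\<exists>\<pi>. bij \<pi> \<and> (AE w in M. \<forall>c. h (X w) c = det_clf (\<pi> \<circ> f) (X w) c)"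
proof -
  obtain \<pi> where "bij \<pi>" and off_support: "\<And>z c. c \<noteq> \<pi> z \<Longrightarrow> Qmat M X h Z $ c $ z = 0"
    using abs_det_eq_prod_row_sums_imp_perm_support[of "transpose (Qmat M X h Z)"] eq
    by (auto simp: det_transpose Qmat_nonneg Qmat_column_sum h Z pos)
  have "AE w in M. c \<noteq> \<pi> z \<longrightarrow> Z w = z \<longrightarrow> h (X w) c = 0" for z c
  proof (cases "c = \<pi> z")
    case False
    then show ?thesis
      using AE_classifier_zero_if_Qmat_zero[OF h Z off_support[OF False]] by simp
  qed simp
  then have "AE w in M. \<forall>z c. c \<noteq> \<pi> z \<longrightarrow> Z w = z \<longrightarrow> h (X w) c = 0"
    unfolding AE_all_countable by blast
  then have "AE w in M. \<forall>c. h (X w) c = det_clf (\<pi> \<circ> f) (X w) c"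
    using truth
  proof eventually_elim
    case (elim w)
    then have "h (X w) c = (if c = \<pi> (f (X w)) then 1 else 0)" for c
      by (intro is_classifier_point_mass[OF h]) auto
    then show ?case
      by (simp add: det_clf_def)
  qed
  with \<open>bij \<pi>\<close> show ?thesis
    by blast
qed

lemma L_DMI_det_clf_le:
  assumes "is_classifier SX h" "f \<in> measurable SX (count_space UNIV)"
    "Z \<in> measurable M (count_space UNIV)" "AE w in M. Z w = f (X w)"
  shows "L_DMI (Qmat M X (det_clf f) Z) \<le> L_DMI (Qmat M X h Z)"
  using abs_det_Qmat_le[OF assms(1,3)]
  by (simp add: L_DMI_le_iff det_Qmat_det_clf[OF assms(2-4)] abs_prod)

lemma L_DMI_det_clf_less:
  assumes "is_classifier SX h" "f \<in> measurable SX (count_space UNIV)"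
    "Z \<in> measurable M (count_space UNIV)" "AE w in M. Z w = f (X w)"
    and "\<And>z. 0 < \<P>(w in M. Z w = z)"
    and "\<nexists>\<pi>. bij \<pi> \<and> (AE w in M. \<forall>c. h (X w) c = det_clf (\<pi> \<circ> f) (X w) c)"
  shows "L_DMI (Qmat M X (det_clf f) Z) < L_DMI (Qmat M X h Z)"
proof -
  have "\<bar>det (Qmat M X h Z)\<bar> \<noteq> (\<Prod>z\<in>UNIV. \<P>(w in M. Z w = z))"
    using abs_det_Qmat_eq_imp_perm[OF assms(1-5)] assms(6) by blast
  then have "\<bar>det (Qmat M X h Z)\<bar> < (\<Prod>z\<in>UNIV. \<P>(w in M. Z w = z))"
    using abs_det_Qmat_le[OF assms(1,3)] by linarith
  then show ?thesis
    by (simp add: L_DMI_less_iff det_Qmat_det_clf[OF assms(2-4)] abs_prod)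
qed

lemma integral_classifier_joint_labels:
  assumes h: "is_classifier SX h"
    and [measurable]: "Y \<in> measurable M (count_space UNIV)" "Yt \<in> measurable M (count_space UNIV)"
    and indep: "cond_indep_XYt M SX X Y Yt" and pos: "0 < \<P>(w in M. Y w = y)"
  shows "(\<integral>w. h (X w) c * (if Y w = y \<and> Yt w = z then 1 else 0) \<partial>M)
       = Qmat M X h Y $ c $ y * Tmat M Y Yt $ y $ z"
proof -
  define B where "B = {w\<in>space M. Yt w = z \<and> Y w = y}"
  define B' where "B' = {w\<in>space M. Y w = y}"
  have [measurable]: "B \<in> sets M" "B' \<in> sets M"
    unfolding B_def B'_def by measurable
  have "\<P>(w in M. Y w = y) * measure M (B \<inter> (X -` A \<inter> space M))
      = \<P>(w in M. Yt w = z \<and> Y w = y) * measure M (B' \<inter> (X -` A \<inter> space M))"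
    if "A \<in> sets SX" for A
  proof -
    have "B \<inter> (X -` A \<inter> space M) = {w \<in> space M. X w \<in> A \<and> Yt w = z \<and> Y w = y}"
         "B' \<inter> (X -` A \<inter> space M) = {w \<in> space M. X w \<in> A \<and> Y w = y}"
      unfolding B_def B'_def by blast+
    then show ?thesis
      using indep that unfolding cond_indep_XYt_def by (simp add: mult.commute)
  qed
  then have "\<P>(w in M. Y w = y) * (\<integral>w. indicator B w * h (X w) c \<partial>M)
      = \<P>(w in M. Yt w = z \<and> Y w = y) * (\<integral>w. indicator B' w * h (X w) c \<partial>M)"
    by (intro integral_comp_indicator_scaled_eq[where SX=SX])
      (simp_all add: finite_measure_axioms is_classifier_measurable[OF h])
  moreover have "(\<integral>w. indicator B w * h (X w) c \<partial>M)
      = (\<integral>w. h (X w) c * (if Y w = y \<and> Yt w = z then 1 else 0) \<partial>M)"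
    by (rule Bochner_Integration.integral_cong) (auto simp: B_def indicator_def)
  moreover have "(\<integral>w. indicator B' w * h (X w) c \<partial>M) = Qmat M X h Y $ c $ y"
    unfolding Qmat_def
    by (simp, rule Bochner_Integration.integral_cong) (auto simp: B'_def indicator_def)
  ultimately show ?thesis
    using pos by (simp add: Tmat_def conj_commute field_simps)
qed

lemma Qmat_noisy_eq_Qmat_mult_Tmat:
  assumes h: "is_classifier SX h"
    and Y: "Y \<in> measurable M (count_space UNIV)" and Yt: "Yt \<in> measurable M (count_space UNIV)"
    and indep: "cond_indep_XYt M SX X Y Yt" and pos: "\<And>y. 0 < \<P>(w in M. Y w = y)"
  shows "Qmat M X h Yt = Qmat M X h Y ** Tmat M Y Yt"
proof -
  have [measurable]: "Y \<in> measurable M (count_space UNIV)" "Yt \<in> measurable M (count_space UNIV)"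
    using Y Yt .
  have "(if Yt w = z then 1 else 0) = (\<Sum>y\<in>UNIV. if Y w = y \<and> Yt w = z then 1 else (0::real))" for w z
    by (simp add: sum.delta')
  then have "Qmat M X h Yt $ c $ z
      = (\<integral>w. (\<Sum>y\<in>UNIV. h (X w) c * (if Y w = y \<and> Yt w = z then 1 else 0)) \<partial>M)" for c z
    by (simp add: Qmat_def sum_distrib_left)
  also have "\<dots> c z = (\<Sum>y\<in>UNIV. Qmat M X h Y $ c $ y * Tmat M Y Yt $ y $ z)" for c z
    by (simp add: integrable_classifier_mult[OF h]
        integral_classifier_joint_labels[OF h Y Yt indep pos])
  finally show ?thesis
    by (simp add: vec_eq_iff matrix_matrix_mult_def)
qed

lemma L_DMI_noisy_label_shift:
  assumes "is_classifier SX h"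
    and "Y \<in> measurable M (count_space UNIV)" "Yt \<in> measurable M (count_space UNIV)"
    and "cond_indep_XYt M SX X Y Yt" and inform: "invertible (Tmat M Y Yt)"
  shows "L_DMI (Qmat M X h Yt) = L_DMI (Qmat M X h Y) + ereal (- ln \<bar>det (Tmat M Y Yt)\<bar>)"
  using inform
  by (simp add: Qmat_noisy_eq_Qmat_mult_Tmat[OF assms(1-4) label_prob_pos_if_invertible_Tmat[OF inform]]
      L_DMI_mult invertible_det_nz)

end

text \<open>Entry (c', c) is Pr[h'(X) = c' | h(X) = c]; a class c with Pr[h(X) = c] = 0 gives a zero
  column, as x / 0 = 0.\<close>

definition clf_channel ::
    "'w measure \<Rightarrow> ('w \<Rightarrow> 'x) \<Rightarrow> ('x \<Rightarrow> 'c::finite \<Rightarrow> real) \<Rightarrow> ('x \<Rightarrow> 'c \<Rightarrow> real) \<Rightarrow> real^'c^'c"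
  where "clf_channel M X h h' = (\<chi> c' c. P_hh' M X h h' c c' / P_h M X h c)"

context random_datapoint
begin

lemma clf_channel_nonneg:
  assumes "is_classifier SX h" "is_classifier SX h'"
  shows "0 \<le> clf_channel M X h h' $ c' $ c"
  unfolding clf_channel_def P_hh'_def P_h_def
  by (simp, intro divide_nonneg_nonneg Bochner_Integration.integral_nonneg mult_nonneg_nonneg
      is_classifier_nonneg[OF assms(1)] is_classifier_nonneg[OF assms(2)])

lemma clf_channel_column_sum_le_one:
  assumes h: "is_classifier SX h" and h': "is_classifier SX h'"
  shows "(\<Sum>c'\<in>UNIV. clf_channel M X h h' $ c' $ c) \<le> 1"
proof -
  have "(\<Sum>c'\<in>UNIV. P_hh' M X h h' c c') = (\<integral>w. h (X w) c * (\<Sum>c'\<in>UNIV. h' (X w) c') \<partial>M)"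
    using integrable_classifier_product[OF h h', of "\<lambda>_. 1"]
    by (simp add: P_hh'_def sum_distrib_left)
  then have "(\<Sum>c'\<in>UNIV. P_hh' M X h h' c c') = P_h M X h c"
    by (simp add: is_classifier_sum[OF h'] P_h_def)
  then show ?thesis
    by (cases "P_h M X h c = 0") (simp_all add: clf_channel_def sum_divide_distrib[symmetric])
qed

lemma Qmat_cond_indep_clf:
  assumes h: "is_classifier SX h" and h': "is_classifier SX h'"
    and [measurable]: "Z \<in> measurable M (count_space UNIV)" and ci: "cond_indep_clf M X h h' Z"
  shows "Qmat M X h' Z = clf_channel M X h h' ** Qmat M X h Z"
proof -
  have integrable: "integrable M (\<lambda>w. h (X w) c * h' (X w) c' * (if Z w = z then 1 else 0))" for c c' z
    by (rule integrable_classifier_product[OF h h']) simp_all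
  have factor: "P_hh'Y M X h h' Z c c' z = clf_channel M X h h' $ c' $ c * Qmat M X h Z $ c $ z"
    for c c' z
  proof (cases "P_h M X h c = 0")
    case True
    have "P_hh'Y M X h h' Z c c' z \<le> P_h M X h c"
      unfolding P_hh'Y_def P_h_def
      by (rule integral_mono[OF integrable integrable_classifier_mult[OF h, of "\<lambda>_. 1", simplified]])
        (auto simp: is_classifier_nonneg[OF h] is_classifier_le_one[OF h'] mult_left_le)
    moreover have "0 \<le> P_hh'Y M X h h' Z c c' z"
      unfolding P_hh'Y_def
      by (intro Bochner_Integration.integral_nonneg mult_nonneg_nonneg is_classifier_nonneg[OF h]
          is_classifier_nonneg[OF h']) simp
    ultimately show ?thesis
      using True by (simp add: clf_channel_def)
  next
    case False
    with ci show ?thesis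
      by (simp add: cond_indep_clf_def clf_channel_def P_hY_def Qmat_def field_simps)
  qed
  have "Qmat M X h' Z $ c' $ z = (\<Sum>c\<in>UNIV. P_hh'Y M X h h' Z c c' z)" for c' z
  proof -
    have "Qmat M X h' Z $ c' $ z
        = (\<integral>w. (\<Sum>c\<in>UNIV. h (X w) c) * h' (X w) c' * (if Z w = z then 1 else 0) \<partial>M)"
      by (simp add: Qmat_def is_classifier_sum[OF h])
    then show ?thesis
      by (simp add: P_hh'Y_def sum_distrib_right integrable)
  qed
  then show ?thesis
    by (simp add: vec_eq_iff matrix_matrix_mult_def factor)
qed

lemma L_DMI_mono_cond_indep_clf:
  assumes "is_classifier SX h" "is_classifier SX h'"
    "Z \<in> measurable M (count_space UNIV)" "cond_indep_clf M X h h' Z"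
  shows "L_DMI (Qmat M X h Z) \<le> L_DMI (Qmat M X h' Z)"
proof -
  have "\<bar>det (clf_channel M X h h')\<bar> \<le> 1"
    using abs_det_le_one_if_row_sums_le_one[of "transpose (clf_channel M X h h')"]
    by (simp add: det_transpose clf_channel_nonneg clf_channel_column_sum_le_one assms(1,2))
  then show ?thesis
    by (simp add: L_DMI_le_iff Qmat_cond_indep_clf[OF assms] det_mul abs_mult mult_left_le_one_le)
qed

end

theorem theorem4p1:
  fixes M :: "'w measure" and SX :: "'x measure"
    and X :: "'w \<Rightarrow> 'x" and Y Yt :: "'w \<Rightarrow> 'c::finite"
  assumes "prob_space M"
    and "X \<in> measurable M SX"
    and "Y \<in> measurable M (count_space UNIV)"
    and "Yt \<in> measurable M (count_space UNIV)"
    and indep: "cond_indep_XYt M SX X Y Yt"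
    and inform: "invertible (Tmat M Y Yt)"
  shows
    "(\<forall>f. f \<in> measurable SX (count_space UNIV) \<and> (AE w in M. Y w = f (X w)) \<longrightarrow>
       (\<forall>h. is_classifier SX h \<longrightarrow>
          L_DMI (Qmat M X (det_clf f) Yt) \<le> L_DMI (Qmat M X h Yt) \<and>
          ((\<nexists>\<pi>. bij \<pi> \<and> (AE w in M. \<forall>c. h (X w) c = det_clf (\<pi> \<circ> f) (X w) c)) \<longrightarrow>
             L_DMI (Qmat M X (det_clf f) Yt) < L_DMI (Qmat M X h Yt))))
   \<and> {h. is_classifier SX h \<and> (\<forall>h'. is_classifier SX h' \<longrightarrow> L_DMI (Qmat M X h Yt) \<le> L_DMI (Qmat M X h' Yt))}
     = {h. is_classifier SX h \<and> (\<forall>h'. is_classifier SX h' \<longrightarrow> L_DMI (Qmat M X h Y) \<le> L_DMI (Qmat M X h' Y))}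
   \<and> (\<exists>\<alpha>::real. \<forall>h. is_classifier SX h \<longrightarrow> L_DMI (Qmat M X h Yt) = L_DMI (Qmat M X h Y) + ereal \<alpha>)
   \<and> (\<forall>h h'. is_classifier SX h \<and> is_classifier SX h' \<and> cond_indep_clf M X h h' Y \<longrightarrow>
          L_DMI (Qmat M X h Yt) \<le> L_DMI (Qmat M X h' Yt))"
proof -
  interpret random_datapoint M SX X
    using assms(1,2) by (simp add: random_datapoint_def random_datapoint_axioms_def)
  have label_pos: "0 < \<P>(w in M. Y w = y)" for y
    by (rule label_prob_pos_if_invertible_Tmat[OF inform])
  define \<alpha> where "\<alpha> = - ln \<bar>det (Tmat M Y Yt)\<bar>"
  have noisy: "L_DMI (Qmat M X h Yt) = L_DMI (Qmat M X h Y) + ereal \<alpha>" if "is_classifier SX h" for h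
    unfolding \<alpha>_def by (rule L_DMI_noisy_label_shift[OF that assms(3,4) indep inform])
  have noisy_le_iff: "L_DMI (Qmat M X h Yt) \<le> L_DMI (Qmat M X h' Yt)
      \<longleftrightarrow> L_DMI (Qmat M X h Y) \<le> L_DMI (Qmat M X h' Y)"
    if "is_classifier SX h" "is_classifier SX h'" for h h'
    by (simp add: noisy that ereal_add_le_add_iff2)
  have legal: "L_DMI (Qmat M X (det_clf f) Yt) \<le> L_DMI (Qmat M X h Yt) \<and>
      ((\<nexists>\<pi>. bij \<pi> \<and> (AE w in M. \<forall>c. h (X w) c = det_clf (\<pi> \<circ> f) (X w) c)) \<longrightarrow>
        L_DMI (Qmat M X (det_clf f) Yt) < L_DMI (Qmat M X h Yt))"
    if f: "f \<in> measurable SX (count_space UNIV)" and truth: "AE w in M. Y w = f (X w)"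
      and h: "is_classifier SX h" for f h
    using L_DMI_det_clf_le[OF h f assms(3) truth] L_DMI_det_clf_less[OF h f assms(3) truth label_pos]
      noisy_le_iff[OF is_classifier_det_clf[OF f] h] noisy_le_iff[OF h is_classifier_det_clf[OF f]]
    by (simp add: not_le[symmetric])
  show ?thesis
  proof (intro conjI)
  qed (use legal noisy noisy_le_iff L_DMI_mono_cond_indep_clf[OF _ _ assms(3)] in blast)+
qed

end
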